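(* Work in the projective model of $\mathbf{Sol}$ geometry described in the context. Let $P_1=(1,0,0,0)$, $P_2=(1,a,b,c)$ with $a,b,c\in\mathbb{R}$, and $\sigma\in\mathbb{R}^+$. The translation-like Apollonius surface $\mathcal{AS}^\sigma_{P_1P_2}$ (the set of points $P=(1,x,y,z)$ with $\sigma\, d^t(P_1,P)=d^t(P,P_2)$) is given by the following implicit equations. (1) If $c\neq0$: for $z\neq0,c$: \[\frac{|c-z|}{|e^{c}-e^z|}\sqrt{(a-x)^2e^{2(c+z)}+(e^{c}-e^{z})^2+(b-y)^2}=\sigma\frac{|z|}{|e^{z}-1|}\sqrt{x^2e^{2z}+(e^{z}-1)^2+y^2};\] for $z=c$: \[\sqrt{(x-a)^2e^{2c}+(y-b)^2e^{-2c}}=\sigma\frac{|z|}{|e^{z}-1|}\sqrt{x^2e^{2z}+(e^{z}-1)^2+y^2};\] for $z=0$: \[\frac{|c|}{|e^{c}-1|}\sqrt{(a-x)^2e^{2c}+(e^{c}-1)^2+(b-y)^2}=\sigma\sqrt{x^2+y^2}.\] (2) If $c=0$: for $z\neq0$: \[\frac{|z|}{|e^z-1|}\sqrt{(a-x)^2e^{2z}+(e^{z}-1)^2+(b-y)^2}=\sigma\frac{|z|}{|e^{z}-1|}\sqrt{x^2e^{2z}+(e^{z}-1)^2+y^2};\] for $z=0$: \[\sqrt{(x-a)^2+(y-b)^2}=\sigma\sqrt{x^2+y^2}.\]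
   Context: $\mathbf{Sol}$ is modelled on $\mathbb{R}^3$ with points in homogeneous coordinates $(1,x,y,z)$. For $Q=(1,q_1,q_2,q_3)$ the translation $\mathbf{T}_Q$ acts on row vectors from the right by the matrix $\begin{pmatrix}1&q_1&q_2&q_3\\0&e^{-q_3}&0&0\\0&0&e^{q_3}&0\\0&0&0&1\end{pmatrix}$, i.e. $(1,a,b,c)\mapsto(1,q_1+ae^{-q_3},q_2+be^{q_3},q_3+c)$; it maps $E_0=(1,0,0,0)$ to $Q$. A translation curve starting at $E_0$ with unit initial tangent $(u,v,w)=(\cos\theta\cos\phi,\cos\theta\sin\phi,\sin\theta)$ solves $\dot x=ue^{-z},\ \dot y=ve^{z},\ \dot z=w$ from the origin: $x(t)=-\frac uw(e^{-wt}-1)$, $y(t)=\frac vw(e^{wt}-1)$, $z(t)=wt$ if $w\ne0$, and $x=ut,y=vt,z=0$ if $w=0$. Translation curves from $Q$ are the $\mathbf{T}_Q$-images of these. The translation distance $d^t(Q,P)$ is the length (parameter $t$) of the translation curve segment from $Q$ to $P$; equivalently $d^t(Q,P)=d^t(E_0,\mathbf{T}_Q^{-1}(P))$. For $\sigma\in\mathbb{R}^+$, the translation-like Apollonius surface of $P_1,P_2$ with parameter $\sigma$ is $\{P:\sigma\, d^t(P_1,P)=d^t(P,P_2)\}$. *)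

theory Defs
  imports Complex_Main
begin

text \<open>Points of Sol in homogeneous coordinates (1,x,y,z) are represented by
  their affine part (x,y,z) :: real \<times> real \<times> real.\<close>

type_synonym solpt = "real \<times> real \<times> real"

definition sol_transl :: "solpt \<Rightarrow> solpt \<Rightarrow> solpt" where
  "sol_transl Q P = (case Q of (q1, q2, q3) \<Rightarrow> case P of (a, b, c) \<Rightarrow>
      (q1 + a * exp (- q3), q2 + b * exp q3, q3 + c))"

text \<open>Translation curve from the origin E0 with unit initial tangent (u,v,w), at parameter t.\<close>
definition trans_curve :: "real \<Rightarrow> real \<Rightarrow> real \<Rightarrow> real \<Rightarrow> solpt" where
  "trans_curve u v w t =
     (if w = 0 then (u * t, v * t, 0)
      else (- (u / w) * (exp (- w * t) - 1), (v / w) * (exp (w * t) - 1), w * t))"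

text \<open>Translation distance: the length (parameter t) of the translation curve segment
  from Q to P, the translation curves from Q being the T_Q-images of those from E0.\<close>
definition trans_dist :: "solpt \<Rightarrow> solpt \<Rightarrow> real" where
  "trans_dist Q P = (THE t. t \<ge> 0 \<and>
     (\<exists>u v w. u\<^sup>2 + v\<^sup>2 + w\<^sup>2 = 1 \<and> sol_transl Q (trans_curve u v w t) = P))"

definition apollonius_surface :: "real \<Rightarrow> solpt \<Rightarrow> solpt \<Rightarrow> solpt set" where
  "apollonius_surface \<sigma> P1 P2 = {P. \<sigma> * trans_dist P1 P = trans_dist P P2}"

end

theory Submission
  imports Defs
begin

text \<open>Along the translation curve with unit tangent (u, v, w) the height is z = w t, and
  e^z x = (u/w)(e^z - 1), y = (v/w)(e^z - 1).  Eliminating the direction with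
  u^2 + v^2 + w^2 = 1 shows that the curve reaches P = (x, y, z) exactly at the parameter
  t = |z| / |e^z - 1| * sqrt (x^2 e^(2z) + (e^z - 1)^2 + y^2)  (t = sqrt (x^2 + y^2) if z = 0),
  so d^t(E0, P) is this explicit function of P.  Since translation curves from Q are the
  T_Q-images of those from E0, d^t(Q, P) = d^t(E0, T_Q^-1 P), and for Q = (x, y, z),
  P = (a, b, c) the point T_Q^-1 P is ((a - x) e^z, (b - y) e^-z, c - z); substituting this
  and clearing the factor e^z gives the equations of the Apollonius surface.\<close>

definition trans_norm :: "real \<Rightarrow> real \<Rightarrow> real \<Rightarrow> real" where
  "trans_norm x y z = (if z = 0 then sqrt (x\<^sup>2 + y\<^sup>2)
     else \<bar>z\<bar> / \<bar>exp z - 1\<bar> * sqrt (x\<^sup>2 * exp (2 * z) + (exp z - 1)\<^sup>2 + y\<^sup>2))"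

lemma trans_norm_nonneg: "trans_norm x y z \<ge> 0"
  by (simp add: trans_norm_def)

lemma trans_curve_param_eq_trans_norm:
  assumes "t \<ge> 0" "u\<^sup>2 + v\<^sup>2 + w\<^sup>2 = 1" "trans_curve u v w t = (x, y, z)"
  shows "t = trans_norm x y z"
proof (cases "w = 0")
  case True
  with assms have xyz: "x = u * t" "y = v * t" "z = 0" by (auto simp: trans_curve_def)
  then have "x\<^sup>2 + y\<^sup>2 = t\<^sup>2 * (u\<^sup>2 + v\<^sup>2)" by (simp add: power_mult_distrib algebra_simps)
  also have "\<dots> = t\<^sup>2" using assms(2) True by simp
  finally show ?thesis using xyz assms(1) by (simp add: trans_norm_def)
next
  case w: False
  with assms have xyz: "x = - (u / w) * (exp (- w * t) - 1)" "y = (v / w) * (exp (w * t) - 1)"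
    "z = w * t"
    by (auto simp: trans_curve_def)
  show ?thesis
  proof (cases "z = 0")
    case True
    then show ?thesis using xyz w by (simp add: trans_norm_def)
  next
    case z: False
    have x: "x = - (u / w) * (exp (- z) - 1)" using xyz by simp
    have "x * exp z = - (u / w) * (exp (- z) * exp z - exp z)"
      unfolding x by (simp add: algebra_simps)
    then have x_exp: "x * exp z = (u / w) * (exp z - 1)" by (simp add: exp_minus_inverse algebra_simps)
    have y: "y = (v / w) * (exp z - 1)" using xyz by simp
    have "x\<^sup>2 * exp (2 * z) + (exp z - 1)\<^sup>2 + y\<^sup>2 = (x * exp z)\<^sup>2 + (exp z - 1)\<^sup>2 + y\<^sup>2"
      by (simp add: power_mult_distrib exp_double)
    also have "\<dots> = ((exp z - 1) / w)\<^sup>2 * (u\<^sup>2 + v\<^sup>2 + w\<^sup>2)"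
      unfolding x_exp y using w
      by (simp add: power_mult_distrib power_divide field_simps; simp add: power2_eq_square algebra_simps)
    also have "\<dots> = ((exp z - 1) / w)\<^sup>2" using assms(2) by simp
    finally have "sqrt (x\<^sup>2 * exp (2 * z) + (exp z - 1)\<^sup>2 + y\<^sup>2) = \<bar>exp z - 1\<bar> / \<bar>w\<bar>"
      by (simp add: abs_div)
    then have "trans_norm x y z = \<bar>z\<bar> / \<bar>w\<bar>" using z by (simp add: trans_norm_def)
    also have "\<dots> = t" using xyz(3) w assms(1) by (simp add: abs_mult)
    finally show ?thesis by simp
  qed
qed

lemma trans_curve_reaches_at_trans_norm:
  "\<exists>u v w. u\<^sup>2 + v\<^sup>2 + w\<^sup>2 = 1 \<and> trans_curve u v w (trans_norm x y z) = (x, y, z)"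
proof (cases "z = 0")
  case z: True
  show ?thesis
  proof (cases "x = 0 \<and> y = 0")
    case True
    then show ?thesis using z
      by (intro exI[of _ 1] exI[of _ 0]) (simp add: trans_norm_def trans_curve_def)
  next
    case False
    define t where "t = sqrt (x\<^sup>2 + y\<^sup>2)"
    have xy_pos: "x\<^sup>2 + y\<^sup>2 > 0" using False by (simp add: sum_power2_gt_zero_iff)
    then have "t > 0" "t\<^sup>2 = x\<^sup>2 + y\<^sup>2" by (simp_all add: t_def)
    then have "(x / t)\<^sup>2 + (y / t)\<^sup>2 + 0\<^sup>2 = 1"
      using xy_pos False by (simp add: power_divide add_divide_distrib[symmetric])
    moreover have "trans_curve (x / t) (y / t) 0 (trans_norm x y z) = (x, y, z)"
      using \<open>t > 0\<close> z by (simp add: trans_norm_def trans_curve_def t_def[symmetric])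
    ultimately show ?thesis by blast
  qed
next
  case z: False
  define S where "S = sqrt (x\<^sup>2 * exp (2 * z) + (exp z - 1)\<^sup>2 + y\<^sup>2)"
  have ez: "exp z - 1 \<noteq> 0" using z by simp
  have "x\<^sup>2 * exp (2 * z) + (exp z - 1)\<^sup>2 + y\<^sup>2 > 0"
    using ez by (simp add: add_nonneg_pos add_pos_nonneg)
  then have S_pos: "S > 0" and S_sq: "S\<^sup>2 = x\<^sup>2 * exp (2 * z) + (exp z - 1)\<^sup>2 + y\<^sup>2"
    by (simp_all add: S_def)
  define w where "w = (exp z - 1) / S"
  have "z / (exp z - 1) > 0"
    using z by (cases "z > 0") (simp_all add: divide_neg_neg)
  then have "\<bar>z\<bar> / \<bar>exp z - 1\<bar> = z / (exp z - 1)" by (metis abs_divide abs_of_pos)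
  then have "trans_norm x y z = z * S / (exp z - 1)" using z by (simp add: trans_norm_def S_def)
  then have wt: "w * trans_norm x y z = z" using ez S_pos by (simp add: w_def)
  have "(x * exp z / S)\<^sup>2 + (y / S)\<^sup>2 + w\<^sup>2 = (x\<^sup>2 * exp (2 * z) + (exp z - 1)\<^sup>2 + y\<^sup>2) / S\<^sup>2"
    by (simp add: w_def power_divide power_mult_distrib add_divide_distrib exp_double[symmetric])
  also have "\<dots> = 1" unfolding S_sq[symmetric] using S_pos by simp
  finally have unit: "(x * exp z / S)\<^sup>2 + (y / S)\<^sup>2 + w\<^sup>2 = 1" .
  have "exp (- z) - 1 = - (exp z - 1) / exp z" by (simp add: exp_minus field_simps)
  then have "- (x * exp z / S / w) * (exp (- w * trans_norm x y z) - 1) = x"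
    using wt S_pos ez by (simp add: w_def field_simps)
  moreover have "(y / S / w) * (exp (w * trans_norm x y z) - 1) = y"
    using wt S_pos ez by (simp add: w_def)
  moreover have "w \<noteq> 0" using ez S_pos by (simp add: w_def)
  ultimately have "trans_curve (x * exp z / S) (y / S) w (trans_norm x y z) = (x, y, z)"
    using wt by (simp add: trans_curve_def)
  with unit show ?thesis by blast
qed

lemma trans_dist_origin: "trans_dist (0, 0, 0) (x, y, z) = trans_norm x y z"
  unfolding trans_dist_def
proof (rule the_equality)
  show "0 \<le> trans_norm x y z \<and> (\<exists>u v w. u\<^sup>2 + v\<^sup>2 + w\<^sup>2 = 1 \<and>
          sol_transl (0, 0, 0) (trans_curve u v w (trans_norm x y z)) = (x, y, z))"
    using trans_norm_nonneg trans_curve_reaches_at_trans_norm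
    by (simp add: sol_transl_def case_prod_beta)
next
  fix t
  assume "0 \<le> t \<and> (\<exists>u v w. u\<^sup>2 + v\<^sup>2 + w\<^sup>2 = 1 \<and> sol_transl (0, 0, 0) (trans_curve u v w t) = (x, y, z))"
  then show "t = trans_norm x y z"
    using trans_curve_param_eq_trans_norm by (auto simp: sol_transl_def case_prod_beta)
qed

lemma sol_transl_eq_iff:
  "sol_transl (x, y, z) P = (a, b, c) \<longleftrightarrow> P = ((a - x) * exp z, (b - y) * exp (- z), c - z)"
proof -
  obtain p q r where P: "P = (p, q, r)" by (cases P) auto
  have "x + p * exp (- z) = a \<longleftrightarrow> p = (a - x) * exp z"
    and "y + q * exp z = b \<longleftrightarrow> q = (b - y) * exp (- z)"
    by (auto simp: exp_minus field_simps)
  then show ?thesis unfolding P sol_transl_def by auto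
qed

lemma trans_dist_eq_trans_norm_transl_inv:
  "trans_dist (x, y, z) (a, b, c) = trans_norm ((a - x) * exp z) ((b - y) * exp (- z)) (c - z)"
proof -
  have "trans_dist (x, y, z) (a, b, c) =
      trans_dist (0, 0, 0) ((a - x) * exp z, (b - y) * exp (- z), c - z)"
    unfolding trans_dist_def sol_transl_eq_iff by (simp add: sol_transl_def case_prod_beta)
  then show ?thesis by (simp add: trans_dist_origin)
qed

lemma trans_dist_different_heights:
  assumes "z \<noteq> c"
  shows "trans_dist (x, y, z) (a, b, c) = \<bar>c - z\<bar> / \<bar>exp c - exp z\<bar> *
    sqrt ((a - x)\<^sup>2 * exp (2 * (c + z)) + (exp c - exp z)\<^sup>2 + (b - y)\<^sup>2)"
proof -
  define I where "I = ((a - x) * exp z)\<^sup>2 * exp (2 * (c - z)) + (exp (c - z) - 1)\<^sup>2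
    + ((b - y) * exp (- z))\<^sup>2"
  define T where "T = (a - x)\<^sup>2 * exp (2 * (c + z)) + (exp c - exp z)\<^sup>2 + (b - y)\<^sup>2"
  have ec: "exp (c - z) = exp c / exp z" by (simp add: exp_diff)
  have "exp (2 * (c - z)) = (exp c / exp z)\<^sup>2" "exp (2 * (c + z)) = (exp c * exp z)\<^sup>2"
    by (simp_all only: exp_double exp_diff exp_add power_divide power_mult_distrib)
  then have "T = (exp z)\<^sup>2 * I" unfolding T_def I_def ec
    by (simp add: exp_minus power_mult_distrib power_divide field_simps;
        simp add: eval_nat_numeral algebra_simps)
  then have sqrt_I: "sqrt I = sqrt T / exp z" by (simp add: real_sqrt_mult)
  have "exp (c - z) - 1 = (exp c - exp z) / exp z" unfolding ec by (simp add: field_simps)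
  then have "\<bar>exp (c - z) - 1\<bar> = \<bar>exp c - exp z\<bar> / exp z" by (simp add: abs_div)
  then have "trans_norm ((a - x) * exp z) ((b - y) * exp (- z)) (c - z)
      = \<bar>c - z\<bar> / \<bar>exp c - exp z\<bar> * sqrt T"
    using assms unfolding trans_norm_def I_def[symmetric] sqrt_I by simp
  then show ?thesis by (simp add: trans_dist_eq_trans_norm_transl_inv T_def)
qed

lemma trans_dist_same_height:
  "trans_dist (x, y, c) (a, b, c) = sqrt ((x - a)\<^sup>2 * exp (2 * c) + (y - b)\<^sup>2 * exp (- 2 * c))"
proof -
  have "exp (2 * c) = (exp c)\<^sup>2" "exp (- 2 * c) = (exp (- c))\<^sup>2"
    by (simp_all add: exp_double[symmetric])
  then show ?thesis
    by (simp add: trans_dist_eq_trans_norm_transl_inv trans_norm_def power_mult_distrib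
        power2_commute)
qed

theorem lemma3p6:
  fixes a b c \<sigma> x y z :: real
  assumes "\<sigma> > 0"
  shows "(x, y, z) \<in> apollonius_surface \<sigma> (0, 0, 0) (a, b, c) \<longleftrightarrow>
    (if c \<noteq> 0 then
       (if z \<noteq> 0 \<and> z \<noteq> c then
          \<bar>c - z\<bar> / \<bar>exp c - exp z\<bar> *
            sqrt ((a - x)\<^sup>2 * exp (2 * (c + z)) + (exp c - exp z)\<^sup>2 + (b - y)\<^sup>2)
          = \<sigma> * (\<bar>z\<bar> / \<bar>exp z - 1\<bar>) * sqrt (x\<^sup>2 * exp (2 * z) + (exp z - 1)\<^sup>2 + y\<^sup>2)
        else if z = c then
          sqrt ((x - a)\<^sup>2 * exp (2 * c) + (y - b)\<^sup>2 * exp (- 2 * c))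
          = \<sigma> * (\<bar>z\<bar> / \<bar>exp z - 1\<bar>) * sqrt (x\<^sup>2 * exp (2 * z) + (exp z - 1)\<^sup>2 + y\<^sup>2)
        else
          \<bar>c\<bar> / \<bar>exp c - 1\<bar> *
            sqrt ((a - x)\<^sup>2 * exp (2 * c) + (exp c - 1)\<^sup>2 + (b - y)\<^sup>2)
          = \<sigma> * sqrt (x\<^sup>2 + y\<^sup>2))
     else
       (if z \<noteq> 0 then
          \<bar>z\<bar> / \<bar>exp z - 1\<bar> *
            sqrt ((a - x)\<^sup>2 * exp (2 * z) + (exp z - 1)\<^sup>2 + (b - y)\<^sup>2)
          = \<sigma> * (\<bar>z\<bar> / \<bar>exp z - 1\<bar>) * sqrt (x\<^sup>2 * exp (2 * z) + (exp z - 1)\<^sup>2 + y\<^sup>2)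
        else
          sqrt ((x - a)\<^sup>2 + (y - b)\<^sup>2) = \<sigma> * sqrt (x\<^sup>2 + y\<^sup>2)))"
proof -
  have surface: "(x, y, z) \<in> apollonius_surface \<sigma> (0, 0, 0) (a, b, c) \<longleftrightarrow>
      trans_dist (x, y, z) (a, b, c) = \<sigma> * trans_norm x y z"
    by (simp add: apollonius_surface_def trans_dist_origin eq_commute)
  consider (z_eq_c) "z = c" | (z_zero) "z = 0" "c \<noteq> 0" | (c_zero) "c = 0" "z \<noteq> 0"
    | (generic) "z \<noteq> 0" "c \<noteq> 0" "z \<noteq> c"
    by blast
  then show ?thesis
  proof cases
    case z_eq_c
    then show ?thesis
      unfolding surface by (simp add: trans_dist_same_height trans_norm_def mult.assoc)
  next
    case z_zero
    then show ?thesis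
      unfolding surface using trans_dist_different_heights[of 0 c] by (simp add: trans_norm_def)
  next
    case c_zero
    have "\<bar>1 - exp z\<bar> = \<bar>exp z - 1\<bar>" "(1 - exp z)\<^sup>2 = (exp z - 1)\<^sup>2"
      by (simp_all add: abs_minus_commute power2_commute)
    with c_zero show ?thesis
      unfolding surface using trans_dist_different_heights[of z 0] by (simp add: trans_norm_def)
  next
    case generic
    then show ?thesis
      unfolding surface using trans_dist_different_heights[of z c]
      by (simp add: trans_norm_def mult.assoc)
  qed
qed

end
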